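(* Let $\mathcal{G}=(\mathcal{V},\mathcal{E})$ be an unweighted connected (finite, simple) graph, let $f:\mathcal{V}\to\mathbb{R}$ be a filtering function, and let $k\geq 1$ be an integer. Let $\mathcal{G}^{k+1}$ denote the $(k+1)$-core of $\mathcal{G}$, equipped with the restriction of $f$ to its vertex set (values not recomputed) and the same threshold set as $\mathcal{G}$. Then for every integer $j\geq k$, $$PD_j(\mathcal{G},f)=PD_j(\mathcal{G}^{k+1},f).$$
   Context: Graphs are finite, simple, undirected. For $f:\mathcal{V}\to\mathbb{R}$, let $\alpha_0<\alpha_1<\dots<\alpha_m$ be a threshold set with $\alpha_0=\min_{v\in \mathcal{V}} f(v)$ and $\alpha_m=\max_{v\in\mathcal{V}} f(v)$. For $0\le i\le m$, let $\mathcal{G}_i$ be the subgraph of $\mathcal{G}$ induced by $\mathcal{V}_i=\{v\in\mathcal{V}: f(v)\leq\alpha_i\}$, and let $\widehat{\mathcal{G}}_i$ be its clique (flag) complex: the simplicial complex whose $r$-simplices are the sets of $r+1$ pairwise adjacent vertices. The nested sequence $\widehat{\mathcal{G}}_0\subset\dots\subset\widehat{\mathcal{G}}_m$ is the sublevel filtration, and $PD_j(\mathcal{G},f)$ is the $j$-th persistence diagram of this filtration (the multiset of birth–death pairs of $j$-dimensional homology classes, homology with coefficients in a fixed field). For a subgraph $\mathcal{H}\subset\mathcal{G}$ with vertex set $\mathcal{W}\subset\mathcal{V}$, $PD_j(\mathcal{H},f)$ is defined the same way using $f|_{\mathcal{W}}$ and the same thresholds $\alpha_0,\dots,\alpha_m$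 (i.e. the $i$-th complex is the clique complex of the subgraph of $\mathcal{H}$ induced by $\{w\in\mathcal{W}: f(w)\le\alpha_i\}$). The $k$-core $\mathcal{G}^k$ of $\mathcal{G}$ is the subgraph obtained by iteratively deleting vertices (with their incident edges) of degree less than $k$; equivalently, the largest induced subgraph in which every vertex has degree at least $k$. *)

theory Defs
  imports Complex_Main "HOL-Library.Function_Algebras" "HOL-Library.Multiset"
    "HOL-Library.Extended_Real"
begin

definition simple_graph :: "'a set \<Rightarrow> 'a set set \<Rightarrow> bool" where
  "simple_graph V E \<longleftrightarrow> finite V \<and>
     (\<forall>e\<in>E. \<exists>u v. u \<in> V \<and> v \<in> V \<and> u \<noteq> v \<and> e = {u, v})"

definition connected_graph :: "'a set \<Rightarrow> 'a set set \<Rightarrow> bool" where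
  "connected_graph V E \<longleftrightarrow>
     (\<forall>u\<in>V. \<forall>v\<in>V. (u, v) \<in> {(x, y). {x, y} \<in> E}\<^sup>*)"

text \<open>Vertex set of the k-core: the largest W \<subseteq> V such that in the subgraph
  induced by W every vertex has degree at least k (the union of all such W,
  which again has this property).\<close>

definition core_verts :: "'a set \<Rightarrow> 'a set set \<Rightarrow> nat \<Rightarrow> 'a set" where
  "core_verts V E k = \<Union>{W. W \<subseteq> V \<and> (\<forall>v\<in>W. k \<le> card {u\<in>W. {u, v} \<in> E})}"

definition clique_cx :: "'a set set \<Rightarrow> 'a set \<Rightarrow> 'a set set" where
  "clique_cx E U = {\<sigma>. \<sigma> \<noteq> {} \<and> finite \<sigma> \<and> \<sigma> \<subseteq> U \<and>
       (\<forall>u\<in>\<sigma>. \<forall>v\<in>\<sigma>. u \<noteq> v \<longrightarrow> {u, v} \<in> E)}"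

definition simps :: "'a set set \<Rightarrow> nat \<Rightarrow> 'a set set" where
  "simps K j = {\<sigma>\<in>K. finite \<sigma> \<and> card \<sigma> = Suc j}"

definition chains :: "'a set set \<Rightarrow> nat \<Rightarrow> ('a set \<Rightarrow> 'k::field) set" where
  "chains K j = {c. \<forall>\<sigma>. c \<sigma> \<noteq> 0 \<longrightarrow> \<sigma> \<in> simps K j}"

text \<open>Orientation induced by the linear order on vertices: the sign of the
  face obtained by deleting the i-th vertex (counting from 0) is (-1)^i.\<close>

definition face_sign :: "'a::linorder set \<Rightarrow> 'a set \<Rightarrow> 'k::field" where
  "face_sign \<sigma> \<tau> = (-1) ^ card {v\<in>\<sigma>. v < the_elem (\<sigma> - \<tau>)}"

definition bd :: "'a::linorder set set \<Rightarrow> nat \<Rightarrow> ('a set \<Rightarrow> 'k::field) \<Rightarrow> ('a set \<Rightarrow> 'k)" where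
  "bd K j c = (\<lambda>\<tau>. if j = 0 then 0
      else if \<tau> \<in> simps K (j - 1)
      then (\<Sum>\<sigma>\<in>{\<sigma>\<in>simps K j. \<tau> \<subseteq> \<sigma>}. face_sign \<sigma> \<tau> * c \<sigma>)
      else 0)"

definition cycles :: "'a::linorder set set \<Rightarrow> nat \<Rightarrow> ('a set \<Rightarrow> 'k::field) set" where
  "cycles K j = {c\<in>chains K j. bd K j c = 0}"

definition boundaries :: "'a::linorder set set \<Rightarrow> nat \<Rightarrow> ('a set \<Rightarrow> 'k::field) set" where
  "boundaries K j = bd K (Suc j) ` chains K (Suc j)"

abbreviation chain_scale :: "'k::field \<Rightarrow> ('a set \<Rightarrow> 'k) \<Rightarrow> ('a set \<Rightarrow> 'k)" where
  "chain_scale \<equiv> (\<lambda>r c. (\<lambda>s. r * c s))"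

text \<open>Persistent Betti number: rank of the map H_j(K) \<rightarrow> H_j(L) induced by the
  inclusion K \<subseteq> L, i.e. dim((Z_j(K) + B_j(L)) / B_j(L)).\<close>

definition pbetti :: "'k::field itself \<Rightarrow> 'a::linorder set set \<Rightarrow> 'a set set \<Rightarrow> nat \<Rightarrow> nat" where
  "pbetti _ K L j =
     vector_space.dim (chain_scale :: 'k \<Rightarrow> _)
        {z + b | z b. z \<in> (cycles K j :: ('a set \<Rightarrow> 'k) set) \<and> b \<in> boundaries L j}
     - vector_space.dim (chain_scale :: 'k \<Rightarrow> _) (boundaries L j :: ('a set \<Rightarrow> 'k) set)"

definition filt :: "'a set set \<Rightarrow> 'a set \<Rightarrow> ('a \<Rightarrow> real) \<Rightarrow> (nat \<Rightarrow> real) \<Rightarrow> nat \<Rightarrow> 'a set set" where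
  "filt E U f \<alpha> i = clique_cx E {u\<in>U. f u \<le> \<alpha> i}"

definition fbeta :: "'k::field itself \<Rightarrow> 'a::linorder set set \<Rightarrow> 'a set \<Rightarrow> ('a \<Rightarrow> real)
     \<Rightarrow> (nat \<Rightarrow> real) \<Rightarrow> nat \<Rightarrow> nat \<Rightarrow> nat \<Rightarrow> int" where
  "fbeta K E U f \<alpha> j i l = int (pbetti K (filt E U f \<alpha> i) (filt E U f \<alpha> l) j)"

text \<open>j-th persistence diagram (Edelsbrunner--Harer): the point (alpha i, alpha l),
  i < l \<le> m, has multiplicity
  beta^{i,l-1} - beta^{i,l} - beta^{i-1,l-1} + beta^{i-1,l}, and the point
  (alpha i, \<infinity>) has multiplicity beta^{i,m} - beta^{i-1,m} (with beta^{-1,_} = 0).\<close>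

definition PD :: "'k::field itself \<Rightarrow> 'a::linorder set set \<Rightarrow> 'a set \<Rightarrow> ('a \<Rightarrow> real)
     \<Rightarrow> (nat \<Rightarrow> real) \<Rightarrow> nat \<Rightarrow> nat \<Rightarrow> (real \<times> ereal) multiset" where
  "PD K E U f \<alpha> m j =
     (let \<beta> = fbeta K E U f \<alpha> j;
          \<beta>' = (\<lambda>i l. if i = 0 then 0 else \<beta> (i - 1) l)
      in (\<Sum>l\<in>{1..m}. \<Sum>i\<in>{0..<l}.
            replicate_mset (nat (\<beta> i (l - 1) - \<beta> i l - \<beta>' i (l - 1) + \<beta>' i l))
              (\<alpha> i, ereal (\<alpha> l)))
       + (\<Sum>i\<in>{0..m}. replicate_mset (nat (\<beta> i m - \<beta>' i m)) (\<alpha> i, PInfty)))"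

end

theory Submission
  imports Defs
begin

text \<open>
  A j-simplex of a clique complex is a clique on j+1 vertices, so each of its vertices has
  j neighbours inside it; hence for j \<ge> k+1 every simplex, in every complex of either
  filtration, lies in the (k+1)-core, and the two filtrations have the same j-chains.
  In degree j = k a k-cycle may a priori use simplices leaving the core. Among the vertices
  of those simplices, the core property gives a vertex v outside the core with at most k
  neighbours among them; a k-simplex through v must then consist of v and all these
  neighbours, so only one such simplex carries v. Deleting another vertex from it yields a
  face whose boundary coefficient is that single nonzero term, contradicting the cycle
  condition. So cycles and boundaries in degrees j \<ge> k coincide for every pair of
  filtration steps, hence so do all persistent Betti numbers and the diagrams.
\<close>

lemma clique_cx_mono: "U' \<subseteq> U \<Longrightarrow> clique_cx E U' \<subseteq> clique_cx E U"
  unfolding clique_cx_def by auto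

lemma clique_cx_Int: "\<sigma> \<in> clique_cx E (U \<inter> W) \<longleftrightarrow> \<sigma> \<in> clique_cx E U \<and> \<sigma> \<subseteq> W"
  unfolding clique_cx_def by auto

lemma clique_cx_face: "\<sigma> \<in> clique_cx E U \<Longrightarrow> \<tau> \<subseteq> \<sigma> \<Longrightarrow> \<tau> \<noteq> {} \<Longrightarrow> \<tau> \<in> clique_cx E U"
  unfolding clique_cx_def by (auto intro: finite_subset)

lemma clique_cx_subset_neighbours:
  "\<sigma> \<in> clique_cx E U \<Longrightarrow> v \<in> \<sigma> \<Longrightarrow> \<sigma> \<subseteq> X \<Longrightarrow> \<sigma> - {v} \<subseteq> {u\<in>X. {u, v} \<in> E}"
  unfolding clique_cx_def by auto

lemma finite_simps_clique_cx: "finite U \<Longrightarrow> finite (simps (clique_cx E U) j)"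
  by (rule finite_subset[of _ "Pow U"]) (auto simp: simps_def clique_cx_def)

lemma simps_mono: "K' \<subseteq> K \<Longrightarrow> simps K' j \<subseteq> simps K j"
  unfolding simps_def by auto

lemma chains_mono: "K' \<subseteq> K \<Longrightarrow> chains K' j \<subseteq> chains K j"
  unfolding chains_def using simps_mono by blast

lemma face_sign_nonzero: "(face_sign \<sigma> \<tau> :: 'k::field) \<noteq> 0"
  by (simp add: face_sign_def)

lemma bd_clique_cx_subset:
  assumes "finite U" and "U' \<subseteq> U" and "c \<in> chains (clique_cx E U') j"
  shows "bd (clique_cx E U) j c = bd (clique_cx E U') j c"
proof
  fix \<tau>
  let ?K = "clique_cx E U" and ?K' = "clique_cx E U'"
  have sub: "simps ?K' n \<subseteq> simps ?K n" for n
    using simps_mono[OF clique_cx_mono[OF assms(2)]] .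
  have c0: "c \<sigma> = 0" if "\<sigma> \<notin> simps ?K' j" for \<sigma>
    using assms(3) that by (auto simp: chains_def)
  consider "j = 0" | "j \<noteq> 0" "\<tau> \<in> simps ?K' (j - 1)"
    | "j \<noteq> 0" "\<tau> \<notin> simps ?K' (j - 1)" "\<tau> \<in> simps ?K (j - 1)"
    | "\<tau> \<notin> simps ?K (j - 1)"
    using sub by blast
  then show "bd ?K j c \<tau> = bd ?K' j c \<tau>"
  proof cases
    case 2
    have "(\<Sum>\<sigma>\<in>{\<sigma>\<in>simps ?K j. \<tau> \<subseteq> \<sigma>}. face_sign \<sigma> \<tau> * c \<sigma>)
        = (\<Sum>\<sigma>\<in>{\<sigma>\<in>simps ?K' j. \<tau> \<subseteq> \<sigma>}. face_sign \<sigma> \<tau> * c \<sigma>)"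
      by (rule sum.mono_neutral_right)
        (use assms(1) sub c0 in \<open>auto intro: finite_subset[OF _ finite_simps_clique_cx]\<close>)
    with 2 sub show ?thesis by (auto simp: bd_def)
  next
    case 3
    \<comment> \<open>a coface of \<tau> in the subcomplex would put \<tau> itself in the subcomplex\<close>
    have "c \<sigma> = 0" if "\<sigma> \<in> simps ?K j" "\<tau> \<subseteq> \<sigma>" for \<sigma>
    proof (rule c0, rule notI)
      assume "\<sigma> \<in> simps ?K' j"
      moreover have "\<tau> \<noteq> {}"
        using 3 by (auto simp: simps_def)
      ultimately have "\<tau> \<in> ?K'"
        using that(2) clique_cx_face[of \<sigma> E U' \<tau>] by (simp add: simps_def)
      with 3 show False
        by (auto simp: simps_def)
    qed
    then have "(\<Sum>\<sigma>\<in>{\<sigma>\<in>simps ?K j. \<tau> \<subseteq> \<sigma>}. face_sign \<sigma> \<tau> * c \<sigma>) = 0"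
      by (intro sum.neutral) auto
    with 3 show ?thesis by (simp add: bd_def)
  qed (use sub in \<open>auto simp: bd_def\<close>)
qed

lemma bd_single_coface:
  assumes "finite (simps K j)" and "j \<noteq> 0" and "\<tau> \<in> simps K (j - 1)"
    and "\<sigma> \<in> simps K j" and "\<tau> \<subseteq> \<sigma>"
    and "\<And>\<rho>. \<rho> \<in> simps K j \<Longrightarrow> \<tau> \<subseteq> \<rho> \<Longrightarrow> c \<rho> \<noteq> 0 \<Longrightarrow> \<rho> = \<sigma>"
  shows "bd K j c \<tau> = face_sign \<sigma> \<tau> * c \<sigma>"
proof -
  let ?A = "{\<rho>\<in>simps K j. \<tau> \<subseteq> \<rho>}"
  have "(\<Sum>\<rho>\<in>?A - {\<sigma>}. face_sign \<rho> \<tau> * c \<rho>) = 0"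
    using assms(6) by (intro sum.neutral) auto
  moreover have "(\<Sum>\<rho>\<in>?A. face_sign \<rho> \<tau> * c \<rho>)
      = face_sign \<sigma> \<tau> * c \<sigma> + (\<Sum>\<rho>\<in>?A - {\<sigma>}. face_sign \<rho> \<tau> * c \<rho>)"
    using assms(1,4,5) by (intro sum.remove) auto
  ultimately show ?thesis
    using assms(2,3) by (simp add: bd_def)
qed

lemma core_verts_subset: "core_verts V E k \<subseteq> V"
  unfolding core_verts_def by auto

lemma core_verts_maximal:
  "W \<subseteq> V \<Longrightarrow> \<forall>v\<in>W. k \<le> card {u\<in>W. {u, v} \<in> E} \<Longrightarrow> W \<subseteq> core_verts V E k"
  unfolding core_verts_def by blast

lemma core_verts_degree:
  assumes "finite V" and "v \<in> core_verts V E k"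
  shows "k \<le> card {u\<in>core_verts V E k. {u, v} \<in> E}"
proof -
  obtain W where W: "W \<subseteq> V" "\<forall>v\<in>W. k \<le> card {u\<in>W. {u, v} \<in> E}" "v \<in> W"
    using assms(2) unfolding core_verts_def by auto
  have "card {u\<in>W. {u, v} \<in> E} \<le> card {u\<in>core_verts V E k. {u, v} \<in> E}"
    using core_verts_maximal[OF W(1,2)] finite_subset[OF core_verts_subset assms(1)]
    by (intro card_mono) auto
  with W show ?thesis by auto
qed

lemma low_degree_vertex_outside_core:
  assumes "finite V" and "X \<subseteq> V" and "\<not> X \<subseteq> core_verts V E k"
  obtains v where "v \<in> X - core_verts V E k" and "card {u\<in>X. {u, v} \<in> E} < k"
proof -
  let ?W = "core_verts V E k"
  let ?Y = "X \<union> ?W"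
  have finY: "finite ?Y"
    using assms(1,2) finite_subset[OF core_verts_subset assms(1)] by (auto intro: finite_subset)
  have "\<not> ?Y \<subseteq> ?W"
    using assms(3) by blast
  then obtain v where v: "v \<in> ?Y" "card {u\<in>?Y. {u, v} \<in> E} < k"
    using core_verts_maximal[of ?Y V k E] assms(2) core_verts_subset by force
  have "v \<notin> ?W"
  proof
    assume "v \<in> ?W"
    then have "k \<le> card {u\<in>?W. {u, v} \<in> E}"
      using core_verts_degree[OF assms(1)] by blast
    also have "\<dots> \<le> card {u\<in>?Y. {u, v} \<in> E}"
      using finY by (intro card_mono) auto
    finally show False
      using v(2) by simp
  qed
  moreover have "card {u\<in>X. {u, v} \<in> E} \<le> card {u\<in>?Y. {u, v} \<in> E}"
    using finY by (intro card_mono) auto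
  ultimately show ?thesis
    using that v by auto
qed

lemma simplex_subset_core_verts:
  assumes "U \<subseteq> V" and "k \<le> n" and "\<sigma> \<in> simps (clique_cx E U) n"
  shows "\<sigma> \<subseteq> core_verts V E k"
proof (rule core_verts_maximal)
  have \<sigma>: "\<sigma> \<in> clique_cx E U" "finite \<sigma>" "card \<sigma> = Suc n"
    using assms(3) by (auto simp: simps_def)
  then show "\<sigma> \<subseteq> V"
    using assms(1) by (auto simp: clique_cx_def)
  show "\<forall>v\<in>\<sigma>. k \<le> card {u\<in>\<sigma>. {u, v} \<in> E}"
  proof
    fix v assume "v \<in> \<sigma>"
    then have "card (\<sigma> - {v}) \<le> card {u\<in>\<sigma>. {u, v} \<in> E}"
      using \<sigma> clique_cx_subset_neighbours[OF \<sigma>(1)] by (intro card_mono) auto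
    with \<open>v \<in> \<sigma>\<close> \<sigma> assms(2) show "k \<le> card {u\<in>\<sigma>. {u, v} \<in> E}"
      by simp
  qed
qed

lemma simps_clique_cx_Int_core_verts:
  assumes "U \<subseteq> V" and "k \<le> n"
  shows "simps (clique_cx E (U \<inter> core_verts V E k)) n = simps (clique_cx E U) n"
  using simplex_subset_core_verts[OF assms] by (auto simp: simps_def clique_cx_Int)

lemma simplex_eq_neighbours:
  assumes "\<rho> \<in> simps (clique_cx E U) k" and "v \<in> \<rho>" and "\<rho> \<subseteq> X" and "finite X"
    and "card {u\<in>X. {u, v} \<in> E} \<le> k"
  shows "\<rho> - {v} = {u\<in>X. {u, v} \<in> E}"
proof (rule card_seteq)
  show "finite {u\<in>X. {u, v} \<in> E}"
    using assms(4) by simp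
  show "\<rho> - {v} \<subseteq> {u\<in>X. {u, v} \<in> E}"
    using assms(1-3) clique_cx_subset_neighbours[of \<rho> E U v X] by (auto simp: simps_def)
  show "card {u\<in>X. {u, v} \<in> E} \<le> card (\<rho> - {v})"
    using assms(1,2,5) by (auto simp: simps_def)
qed

lemma cycle_vertex_in_two_simplices:
  assumes "finite U" and "1 \<le> k" and z: "z \<in> cycles (clique_cx E U) k"
    and \<sigma>: "\<sigma> \<in> simps (clique_cx E U) k" "z \<sigma> \<noteq> 0" and "v \<in> \<sigma>"
  obtains \<rho> where "\<rho> \<in> simps (clique_cx E U) k" "z \<rho> \<noteq> 0" "v \<in> \<rho>" "\<rho> \<noteq> \<sigma>"
proof (rule ccontr)
  let ?K = "clique_cx E U"
  assume "\<not> thesis"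
  with that have unique: "\<rho> = \<sigma>" if "\<rho> \<in> simps ?K k" "v \<in> \<rho>" "z \<rho> \<noteq> 0" for \<rho>
    using that by blast
  have "card (\<sigma> - {v}) = k"
    using \<sigma>(1) assms(6) by (auto simp: simps_def)
  with assms(2) have "\<sigma> - {v} \<noteq> {}"
    by (metis card.empty not_one_le_zero)
  then obtain w where w: "w \<in> \<sigma>" "w \<noteq> v"
    by blast
  define \<tau> where "\<tau> = \<sigma> - {w}"
  have "\<tau> \<in> ?K"
    using \<sigma>(1) w assms(6) clique_cx_face[of \<sigma> E U \<tau>] by (auto simp: simps_def \<tau>_def)
  moreover have "card \<tau> = k"
    using \<sigma>(1) w(1) by (auto simp: simps_def \<tau>_def)
  ultimately have \<tau>_simp: "\<tau> \<in> simps ?K (k - 1)"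
    using assms(2) \<sigma>(1) by (auto simp: simps_def \<tau>_def)
  have "bd ?K k z \<tau> = face_sign \<sigma> \<tau> * z \<sigma>"
  proof (rule bd_single_coface[OF finite_simps_clique_cx[OF assms(1)] _ \<tau>_simp \<sigma>(1)])
    show "k \<noteq> 0" "\<tau> \<subseteq> \<sigma>"
      using assms(2) by (auto simp: \<tau>_def)
    have "v \<in> \<tau>"
      using w(2) assms(6) by (simp add: \<tau>_def)
    then show "\<rho> = \<sigma>" if "\<rho> \<in> simps ?K k" "\<tau> \<subseteq> \<rho>" "z \<rho> \<noteq> 0" for \<rho>
      using unique that by blast
  qed
  with \<sigma>(2) have "bd ?K k z \<tau> \<noteq> 0"
    by (simp add: face_sign_nonzero)
  with z show False
    by (simp add: cycles_def)
qed

lemma cycle_support_subset_core_verts: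
  assumes "finite V" and "U \<subseteq> V" and "1 \<le> k"
    and z: "z \<in> cycles (clique_cx E U) k" and "z \<sigma> \<noteq> 0"
  shows "\<sigma> \<subseteq> core_verts V E (Suc k)"
proof (rule ccontr)
  assume "\<not> \<sigma> \<subseteq> core_verts V E (Suc k)"
  let ?W = "core_verts V E (Suc k)" and ?K = "clique_cx E U"
  define S where "S = {\<rho>. z \<rho> \<noteq> 0 \<and> \<not> \<rho> \<subseteq> ?W}"
  define X where "X = \<Union>S"
  have S_simps: "S \<subseteq> simps ?K k"
    using z by (auto simp: S_def cycles_def chains_def)
  have "X \<subseteq> V"
  proof
    fix x assume "x \<in> X"
    then obtain \<rho> where "\<rho> \<in> S" "x \<in> \<rho>"
      by (auto simp: X_def)
    moreover have "\<rho> \<subseteq> U"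
      using S_simps \<open>\<rho> \<in> S\<close> by (auto simp: simps_def clique_cx_def)
    ultimately show "x \<in> V"
      using assms(2) by blast
  qed
  moreover have "\<not> X \<subseteq> ?W"
    using \<open>\<not> \<sigma> \<subseteq> ?W\<close> assms(5) by (auto simp: X_def S_def)
  ultimately obtain v where "v \<in> X - ?W" and "card {u\<in>X. {u, v} \<in> E} < Suc k"
    by (rule low_degree_vertex_outside_core[OF assms(1)])
  then have v: "v \<in> X" "v \<notin> ?W" "card {u\<in>X. {u, v} \<in> E} \<le> k"
    by auto
  have finX: "finite X"
    using \<open>X \<subseteq> V\<close> assms(1) by (rule finite_subset)
  have nbrs: "\<rho> - {v} = {u\<in>X. {u, v} \<in> E}" if "\<rho> \<in> simps ?K k" "v \<in> \<rho>" "z \<rho> \<noteq> 0" for \<rho>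
  proof -
    have "\<rho> \<in> S"
      using that v(2) by (auto simp: S_def)
    then show ?thesis
      using simplex_eq_neighbours[OF that(1,2) _ finX v(3)] by (auto simp: X_def)
  qed
  obtain \<sigma>0 where \<sigma>0: "\<sigma>0 \<in> S" "v \<in> \<sigma>0"
    using v(1) by (auto simp: X_def)
  then have \<sigma>0_simp: "\<sigma>0 \<in> simps ?K k" and "z \<sigma>0 \<noteq> 0"
    using S_simps by (auto simp: S_def)
  have "finite U"
    using assms(1,2) by (rule finite_subset[rotated])
  then obtain \<rho> where \<rho>: "\<rho> \<in> simps ?K k" "z \<rho> \<noteq> 0" "v \<in> \<rho>" "\<rho> \<noteq> \<sigma>0"
    using cycle_vertex_in_two_simplices[OF _ assms(3) z \<sigma>0_simp \<open>z \<sigma>0 \<noteq> 0\<close> \<sigma>0(2)] by blast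
  have "\<rho> - {v} = \<sigma>0 - {v}"
    using nbrs[OF \<rho>(1,3,2)] nbrs[OF \<sigma>0_simp \<sigma>0(2) \<open>z \<sigma>0 \<noteq> 0\<close>] by simp
  with \<rho>(3,4) \<sigma>0(2) show False
    by blast
qed

lemma cycles_clique_cx_Int_core_verts:
  assumes "finite V" and "U \<subseteq> V" and "1 \<le> k" and "k \<le> j"
  shows "(cycles (clique_cx E (U \<inter> core_verts V E (Suc k))) j :: ('a::linorder set \<Rightarrow> 'k::field) set)
       = cycles (clique_cx E U) j"
proof -
  let ?K = "clique_cx E U" and ?K' = "clique_cx E (U \<inter> core_verts V E (Suc k))"
  have finU: "finite U"
    using assms(1,2) by (rule finite_subset[rotated])
  have support: "z \<in> chains ?K' j" if "z \<in> cycles ?K j" for z :: "'a set \<Rightarrow> 'k"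
  proof (cases "j = k")
    case True
    show ?thesis
      unfolding chains_def
    proof (intro CollectI allI impI)
      fix \<sigma> assume "z \<sigma> \<noteq> 0"
      then have "\<sigma> \<in> simps ?K j"
        using that by (auto simp: cycles_def chains_def)
      moreover have "\<sigma> \<subseteq> core_verts V E (Suc k)"
        using cycle_support_subset_core_verts[OF assms(1-3)] that True \<open>z \<sigma> \<noteq> 0\<close> by simp
      ultimately show "\<sigma> \<in> simps ?K' j"
        by (simp add: simps_def clique_cx_Int)
    qed
  next
    case False
    then have "simps ?K' j = simps ?K j"
      using simps_clique_cx_Int_core_verts[OF assms(2), of "Suc k" j E] assms(4) by simp
    with that show ?thesis
      by (simp add: cycles_def chains_def)
  qed
  have chains_sub: "chains ?K' j \<subseteq> (chains ?K j :: ('a set \<Rightarrow> 'k) set)"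
    by (intro chains_mono clique_cx_mono) blast
  have bd_eq: "bd ?K j z = bd ?K' j z" if "z \<in> chains ?K' j" for z :: "'a set \<Rightarrow> 'k"
    by (rule bd_clique_cx_subset[OF finU Int_lower1 that])
  show ?thesis
  proof (intro equalityI subsetI)
    fix z :: "'a set \<Rightarrow> 'k" assume "z \<in> cycles ?K' j"
    with chains_sub bd_eq show "z \<in> cycles ?K j"
      by (auto simp: cycles_def)
  next
    fix z :: "'a set \<Rightarrow> 'k" assume z: "z \<in> cycles ?K j"
    then have "z \<in> chains ?K' j"
      by (rule support)
    with z bd_eq show "z \<in> cycles ?K' j"
      by (simp add: cycles_def)
  qed
qed

lemma boundaries_clique_cx_Int_core_verts:
  assumes "finite V" and "U \<subseteq> V" and "k \<le> j"
  shows "(boundaries (clique_cx E (U \<inter> core_verts V E (Suc k))) j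
            :: ('a::linorder set \<Rightarrow> 'k::field) set)
       = boundaries (clique_cx E U) j"
proof -
  let ?K = "clique_cx E U" and ?K' = "clique_cx E (U \<inter> core_verts V E (Suc k))"
  have finU: "finite U"
    using assms(1,2) by (rule finite_subset[rotated])
  have chains_eq: "(chains ?K' (Suc j) :: ('a set \<Rightarrow> 'k) set) = chains ?K (Suc j)"
    using simps_clique_cx_Int_core_verts[OF assms(2), of "Suc k" "Suc j" E] assms(3)
    by (simp add: chains_def)
  have "bd ?K' (Suc j) c = bd ?K (Suc j) c" if "c \<in> chains ?K (Suc j)" for c :: "'a set \<Rightarrow> 'k"
  proof -
    have "c \<in> chains ?K' (Suc j)"
      using that chains_eq by simp
    then show ?thesis
      by (rule bd_clique_cx_subset[OF finU Int_lower1, symmetric])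
  qed
  then show ?thesis
    unfolding boundaries_def chains_eq by (rule image_cong[OF refl])
qed

theorem theorem1:
  fixes V :: "'a::linorder set" and E :: "'a set set" and f :: "'a \<Rightarrow> real"
    and \<alpha> :: "nat \<Rightarrow> real" and m k j :: nat
  assumes "simple_graph V E" and "connected_graph V E" and "V \<noteq> {}"
    and "\<forall>i<m. \<alpha> i < \<alpha> (Suc i)"
    and "\<alpha> 0 = Min (f ` V)" and "\<alpha> m = Max (f ` V)"
    and "1 \<le> k" and "k \<le> j"
  shows "PD TYPE('k::field) E V f \<alpha> m j = PD TYPE('k) E (core_verts V E (Suc k)) f \<alpha> m j"
proof -
  let ?W = "core_verts V E (Suc k)"
  have finV: "finite V"
    using assms(1) by (simp add: simple_graph_def)
  have filt_core: "filt E ?W f \<alpha> i = clique_cx E ({u\<in>V. f u \<le> \<alpha> i} \<inter> ?W)" for i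
    unfolding filt_def using core_verts_subset[of V E "Suc k"]
    by (intro arg_cong[where f = "clique_cx E"]) auto
  have "fbeta TYPE('k) E V f \<alpha> j = fbeta TYPE('k) E ?W f \<alpha> j"
    unfolding fbeta_def pbetti_def filt_core
    using cycles_clique_cx_Int_core_verts[OF finV _ assms(7,8), where 'k = 'k]
      boundaries_clique_cx_Int_core_verts[OF finV _ assms(8), where 'k = 'k]
    by (simp add: filt_def del: Collect_conj_eq)
  then show ?thesis
    unfolding PD_def by simp
qed

end
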